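(* Let $\{t_n\}$, $\mu_n$, $A$, $B$ and $\{s_n\}$ be as follows: $\{t_n\}_{n\in\mathbb Z}\subset\mathbb R$ increasing with $t_n\to\pm\infty$ as $n\to\pm\infty$; $\mu_n>0$ with $\sum_n\mu_n<\infty$; $A$ entire, real on $\mathbb R$, with only simple zeros, exactly at the $t_n$; $B$ entire defined by $B(z)/A(z)=\sum_n\mu_n/(z-t_n)$; $s_n$ the zero of $B$ in $(t_n,t_{n+1})$. Put $I_n=[t_n,t_{n+1}]$ and assume $|I_k|\asymp|I_n|$ for $n\le k\le 2n$ (constants independent of $k,n$), and that $|t_{an}|\ge\rho|t_n|$ for some $a\ge2$, $\rho>1$ and all $n$. Then for every $\delta>0$ the set of indices $n$ with $t_n>0$ and $t_{n+1}-s_n\ge\delta|I_n|$ has zero density, and likewise the set of indices $n$ with $t_n<0$ and $s_n-t_n\ge\delta|I_n|$ has zero density.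
   Context: A set $\mathcal N$ of integers has zero density if $\operatorname{card}\{n\in\mathcal N:|n|\le R\}/R\to0$ as $R\to\infty$. The notation $U\asymp V$ means $C^{-1}V\le U\le CV$ for a constant $C>0$. *)

theory Defs
  imports "HOL-Analysis.Analysis"
begin

definition zero_density :: "int set \<Rightarrow> bool" where
  "zero_density N \<longleftrightarrow>
     ((\<lambda>R::real. real (card {n\<in>N. real_of_int \<bar>n\<bar> \<le> R}) / R) \<longlongrightarrow> 0) at_top"

end

theory Submission
  imports Defs "HOL-Computational_Algebra.Polynomial"
begin

(* Only real analysis is needed: at a zero s_n of B (which lies strictly inside the gap
   (t_n, t_(n+1)), where A does not vanish), the hypothesis B/A = \<Sum> \<mu>_k/(z - t_k) gives
   \<Sum>_k \<mu>_k/(s_n - t_k) = 0.  For n in a dyadic block [N, 2N+1] far to the right, the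
   poles left of N/2 contribute at least \<mu>_0 / (t_(2N+2) - t_0), and the poles right of
   4N+4 carry only a small tail mass; by the gap comparability and the geometric growth of
   t, t_(2N+2) = O(N |I_N|), so the finitely many poles in (N/2, 4N+4] push the Cauchy sum
   at s_n below -\<lambda> with \<lambda> \<approx> \<mu>_0 / (N |I_N|).  Boole's identity for finite Cauchy sums
   (the set where \<Sum> \<mu>_k/(x - t_k) < -\<lambda> has length mass/\<lambda>) then bounds the total distance
   \<Sum> (t_(n+1) - s_n) over the block by (block mass) N |I_N| / \<mu>_0 = o(N |I_N|), while each
   bad n contributes \<ge> \<delta> |I_N| / C^3.  So bad indices are o(N) per dyadic block, which gives
   zero density.  The left half-line follows by reflecting t_n \<mapsto> -t_(-n). *)

lemma prod_linear_factors:
  fixes c :: "'a \<Rightarrow> real"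
  assumes "finite S"
  shows "degree (\<Prod>k\<in>S. [:-c k, 1:]) = card S" "coeff (\<Prod>k\<in>S. [:-c k, 1:]) (card S) = 1"
    and "S \<noteq> {} \<Longrightarrow> coeff (\<Prod>k\<in>S. [:-c k, 1:]) (card S - 1) = - (\<Sum>k\<in>S. c k)"
proof -
  have "degree (\<Prod>k\<in>S. [:-c k, 1:]) = card S \<and> coeff (\<Prod>k\<in>S. [:-c k, 1:]) (card S) = 1
     \<and> (S \<noteq> {} \<longrightarrow> coeff (\<Prod>k\<in>S. [:-c k, 1:]) (card S - 1) = - (\<Sum>k\<in>S. c k))"
    using assms
  proof (induction S rule: finite_induct)
    case (insert x S)
    let ?P = "\<Prod>k\<in>S. [:-c k, 1:]"
    have shift: "coeff ([:-c x, 1:] * ?P) (Suc n) = -c x * coeff ?P (Suc n) + coeff ?P n" for n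
      by (simp add: mult_pCons_left)
    have dP: "degree ?P = card S" and lP: "coeff ?P (card S) = 1" using insert by auto
    then have "?P \<noteq> 0" by auto
    then have deg: "degree ([:-c x, 1:] * ?P) = card S + 1" by (subst degree_mult_eq) (auto simp: dP)
    have lead: "coeff ([:-c x, 1:] * ?P) (card S + 1) = 1"
      using shift[of "card S"] lP dP by (simp add: coeff_eq_0)
    have next_coeff: "coeff ([:-c x, 1:] * ?P) (card S) = - (\<Sum>k\<in>insert x S. c k)"
    proof (cases "S = {}")
      case False
      then obtain m where m: "card S = Suc m" using insert(1) by (metis card_gt_0_iff gr0_implies_Suc)
      then show ?thesis using shift[of m] insert lP False by simp
    qed simp
    show ?case using insert deg lead next_coeff by simp
  qed simp
  then show "degree (\<Prod>k\<in>S. [:-c k, 1:]) = card S" "coeff (\<Prod>k\<in>S. [:-c k, 1:]) (card S) = 1"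
    and "S \<noteq> {} \<Longrightarrow> coeff (\<Prod>k\<in>S. [:-c k, 1:]) (card S - 1) = - (\<Sum>k\<in>S. c k)" by auto
qed

lemma vieta_second_coeff:
  fixes p :: "real poly" and r :: "'a \<Rightarrow> real"
  assumes fin: "finite K" and ne: "K \<noteq> {}" and inj: "inj_on r K"
    and deg: "degree p \<le> card K" and lead: "coeff p (card K) = c"
    and roots: "\<And>k. k \<in> K \<Longrightarrow> poly p (r k) = 0"
  shows "coeff p (card K - 1) = - c * (\<Sum>k\<in>K. r k)"
proof -
  define R where "R = (\<Prod>k\<in>K. [:-r k, 1:])"
  note RL = prod_linear_factors[OF fin, of r, folded R_def]
  have "p = smult c R"
  proof (rule poly_eqI_degree_lead_coeff[where n = "card K" and A = "r ` K"])
    show "card K \<le> card (r ` K)" using card_image[OF inj] by simp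
    fix z assume "z \<in> r ` K"
    then obtain k where "k \<in> K" "z = r k" by auto
    then show "poly p z = poly (smult c R) z"
      using roots fin by (auto simp: R_def poly_prod prod_zero_iff)
  qed (use deg lead RL in auto)
  then show ?thesis using RL(3)[OF ne] by simp
qed

lemma cauchy_sum_strict_anti:
  fixes t \<mu> :: "int \<Rightarrow> real"
  assumes t_mono: "strict_mono t" and mu: "\<And>k. k \<in> K \<Longrightarrow> \<mu> k > 0"
    and fin: "finite K" and ne: "K \<noteq> {}"
    and y: "t n < y1" "y1 < y2" "y2 < t (n+1)"
  shows "(\<Sum>k\<in>K. \<mu> k / (y2 - t k)) < (\<Sum>k\<in>K. \<mu> k / (y1 - t k))"
proof (rule sum_strict_mono[OF fin ne])
  fix j assume j: "j \<in> K"
  show "\<mu> j / (y2 - t j) < \<mu> j / (y1 - t j)"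
  proof (cases "j \<le> n")
    case True
    then have "t j \<le> t n" using t_mono by (simp add: strict_mono_less_eq)
    then have "0 < y1 - t j" "y1 - t j < y2 - t j" using y by auto
    then show ?thesis using mu[OF j] by (intro divide_strict_left_mono) auto
  next
    case False
    then have "t (n+1) \<le> t j" using t_mono by (simp add: strict_mono_less_eq)
    then have "y2 - t j < 0" "y1 - t j < y2 - t j" using y by auto
    then have "inverse (y2 - t j) < inverse (y1 - t j)" by (intro less_imp_inverse_less_neg) auto
    then show ?thesis using mu[OF j] by (simp add: divide_inverse mult_strict_left_mono)
  qed
qed

(* Boole's identity for a finite block of poles t k, L < k \<le> U, with positive masses \<mu> k:
   the equation  cauchy x = -lam  has one root r k below each pole t k (interlacing the
   poles), and the total length  \<Sum> (t k - r k)  equals  mass / lam.  The roots are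
   located by sign changes of the polynomial  boole_poly = (lam + cauchy) * \<Prod>(x - t j),
   and the identity is Vieta's formula for its second coefficient. *)
locale boole_block =
  fixes t \<mu> :: "int \<Rightarrow> real" and L U :: int and lam :: real
  assumes t_mono: "strict_mono t" and L_less_U: "L < U"
    and mu_pos: "\<And>k. k \<in> {L<..U} \<Longrightarrow> \<mu> k > 0" and lam_pos: "lam > 0"
begin

abbreviation J :: "int set" where "J \<equiv> {L<..U}"

definition cauchy :: "real \<Rightarrow> real" where
  "cauchy x = (\<Sum>k\<in>J. \<mu> k / (x - t k))"

definition mass :: real where
  "mass = (\<Sum>k\<in>J. \<mu> k)"

definition boole_poly :: "real poly" where
  "boole_poly = smult lam (\<Prod>j\<in>J. [:-t j, 1:]) + (\<Sum>k\<in>J. smult (\<mu> k) (\<Prod>j\<in>J-{k}. [:-t j, 1:]))"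

lemma t_less: "i < j \<Longrightarrow> t i < t j"
  using t_mono by (simp add: strict_mono_less)

lemma t_le: "i \<le> j \<Longrightarrow> t i \<le> t j"
  using t_mono by (simp add: strict_mono_less_eq)

lemma first_in_block: "L + 1 \<in> J"
  using L_less_U by simp

lemma mass_pos: "mass > 0"
  unfolding mass_def using mu_pos first_in_block by (intro sum_pos) auto

lemma poly_boole_poly:
  "poly boole_poly x = lam * (\<Prod>j\<in>J. x - t j) + (\<Sum>k\<in>J. \<mu> k * (\<Prod>j\<in>J-{k}. x - t j))"
  unfolding boole_poly_def by (simp add: poly_prod poly_sum)

lemma poly_boole_poly_off_poles:
  assumes "\<And>k. k \<in> J \<Longrightarrow> x \<noteq> t k"
  shows "poly boole_poly x = (\<Prod>j\<in>J. x - t j) * (lam + cauchy x)"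
proof -
  have "(\<Prod>j\<in>J-{k}. x - t j) = (\<Prod>j\<in>J. x - t j) / (x - t k)" if "k \<in> J" for k
    using that assms by (simp add: prod_diff1)
  then have "(\<Sum>k\<in>J. \<mu> k * (\<Prod>j\<in>J-{k}. x - t j)) = (\<Prod>j\<in>J. x - t j) * cauchy x"
    unfolding cauchy_def by (simp add: sum_distrib_left mult_ac)
  then show ?thesis using poly_boole_poly by (simp add: algebra_simps)
qed

lemma poly_boole_poly_at_pole:
  assumes k: "k \<in> J"
  shows "poly boole_poly (t k) = \<mu> k * (\<Prod>j\<in>J-{k}. t k - t j)"
proof -
  have vanish: "(\<Prod>j\<in>J-{i}. t k - t j) = 0" if "i \<in> J - {k}" for i
    using that k by (intro prod_zero) auto
  have "(\<Sum>i\<in>J. \<mu> i * (\<Prod>j\<in>J-{i}. t k - t j))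
      = \<mu> k * (\<Prod>j\<in>J-{k}. t k - t j) + (\<Sum>i\<in>J-{k}. \<mu> i * (\<Prod>j\<in>J-{i}. t k - t j))"
    by (rule sum.remove) (use k in auto)
  also have "(\<Sum>i\<in>J-{k}. \<mu> i * (\<Prod>j\<in>J-{i}. t k - t j)) = 0"
    by (intro sum.neutral ballI) (simp add: vanish)
  finally have "(\<Sum>i\<in>J. \<mu> i * (\<Prod>j\<in>J-{i}. t k - t j)) = \<mu> k * (\<Prod>j\<in>J-{k}. t k - t j)"
    by simp
  moreover have "(\<Prod>j\<in>J. t k - t j) = 0" using k by (intro prod_zero) auto
  ultimately show ?thesis using poly_boole_poly by simp
qed

lemma boole_poly_at_pole_nonzero:
  assumes k: "k \<in> J"
  shows "poly boole_poly (t k) \<noteq> 0"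
proof -
  have "t k - t j \<noteq> 0" if "j \<in> J - {k}" for j
    using that t_less[of j k] t_less[of k j] by (cases "j < k") auto
  then show ?thesis using k mu_pos[OF k] by (auto simp: poly_boole_poly_at_pole prod_zero_iff)
qed

lemma boole_poly_sign_change:
  assumes k: "k \<in> J" "k - 1 \<in> J"
  shows "poly boole_poly (t (k-1)) * poly boole_poly (t k) < 0"
proof -
  define J' where "J' = J - {k-1, k}"
  have split: "J - {k-1} = insert k J'" "J - {k} = insert (k-1) J'" "k \<notin> J'" "k-1 \<notin> J'"
    using k unfolding J'_def by auto
  have same_sign: "(\<Prod>j\<in>J'. (t (k-1) - t j) * (t k - t j)) > 0"
  proof (intro prod_pos ballI)
    fix j assume "j \<in> J'"
    then have "j < k - 1 \<or> j > k" unfolding J'_def by auto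
    then show "(t (k-1) - t j) * (t k - t j) > 0"
      using t_less[of j "k-1"] t_less[of k j] t_less[of "k-1" k]
      by (auto intro: mult_pos_pos mult_neg_neg)
  qed
  have fin: "finite J'" unfolding J'_def by simp
  have p1: "(\<Prod>j\<in>J-{k-1}. t (k-1) - t j) = (t (k-1) - t k) * (\<Prod>j\<in>J'. t (k-1) - t j)"
    unfolding split(1) using fin split(3) by simp
  have p2: "(\<Prod>j\<in>J-{k}. t k - t j) = (t k - t (k-1)) * (\<Prod>j\<in>J'. t k - t j)"
    unfolding split(2) using fin split(4) by simp
  have "poly boole_poly (t (k-1)) * poly boole_poly (t k)
      = (\<mu> (k-1) * \<mu> k) * ((t (k-1) - t k) * (t k - t (k-1))) * (\<Prod>j\<in>J'. (t (k-1) - t j) * (t k - t j))"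
    using poly_boole_poly_at_pole[OF k(1)] poly_boole_poly_at_pole[OF k(2)] p1 p2
    by (simp add: prod.distrib mult_ac)
  also have "\<dots> < 0"
  proof (rule mult_neg_pos[OF _ same_sign], rule mult_pos_neg)
    show "\<mu> (k-1) * \<mu> k > 0" using mu_pos k by auto
    show "(t (k-1) - t k) * (t k - t (k-1)) < 0" using t_less[of "k-1" k] by (intro mult_neg_pos) auto
  qed
  finally show ?thesis .
qed

definition left_point :: real where
  "left_point = t (L+1) - mass / lam"

lemma left_point_below:
  assumes "k \<in> J" shows "left_point < t k"
proof -
  have "mass / lam > 0" using mass_pos lam_pos by simp
  then show ?thesis using t_le[of "L+1" k] assms unfolding left_point_def by auto
qed

lemma cauchy_left_point: "cauchy left_point \<ge> - lam"
proof -
  have "\<mu> k * (- lam / mass) \<le> \<mu> k / (left_point - t k)" if k: "k \<in> J" for k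
  proof -
    have "left_point - t k \<le> - (mass / lam)"
      using t_le[of "L+1" k] k unfolding left_point_def by auto
    moreover have "mass / lam > 0" using mass_pos lam_pos by simp
    ultimately have "inverse (- (mass / lam)) \<le> inverse (left_point - t k)"
      by (intro le_imp_inverse_le_neg) auto
    then have "- lam / mass \<le> 1 / (left_point - t k)" by (simp add: inverse_eq_divide)
    then show ?thesis using mu_pos[OF k]
      by (metis mult_left_mono less_imp_le times_divide_eq_right mult_1_right)
  qed
  then have "(\<Sum>k\<in>J. \<mu> k * (- lam / mass)) \<le> cauchy left_point"
    unfolding cauchy_def by (intro sum_mono) auto
  also have "(\<Sum>k\<in>J. \<mu> k * (- lam / mass)) = mass * (- lam / mass)"
    unfolding mass_def by (rule sum_distrib_right[symmetric])
  also have "\<dots> = - lam" using mass_pos by simp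
  finally show ?thesis .
qed

lemma boole_poly_sign_change_first:
  "poly boole_poly left_point * poly boole_poly (t (L+1)) \<le> 0"
proof -
  define J1 where "J1 = J - {L+1}"
  have split: "J = insert (L+1) J1" "L+1 \<notin> J1" using first_in_block unfolding J1_def by auto
  have same_sign: "(\<Prod>j\<in>J1. (left_point - t j) * (t (L+1) - t j)) > 0"
  proof (intro prod_pos ballI)
    fix j assume "j \<in> J1"
    then have "t (L+1) < t j" "left_point < t j" using t_less left_point_below unfolding J1_def by auto
    then show "(left_point - t j) * (t (L+1) - t j) > 0" by (intro mult_neg_neg) auto
  qed
  have p: "(\<Prod>j\<in>J. left_point - t j) = (left_point - t (L+1)) * (\<Prod>j\<in>J1. left_point - t j)"
  proof -
    have "finite J1" unfolding J1_def by simp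
    then show ?thesis using prod.insert[of J1 "L+1" "\<lambda>j. left_point - t j"] split by simp
  qed
  have "poly boole_poly left_point * poly boole_poly (t (L+1))
      = ((left_point - t (L+1)) * ((lam + cauchy left_point) * \<mu> (L+1)))
        * (\<Prod>j\<in>J1. (left_point - t j) * (t (L+1) - t j))"
    using poly_boole_poly_off_poles[of left_point] left_point_below[THEN less_imp_neq]
      poly_boole_poly_at_pole[OF first_in_block] p unfolding J1_def[symmetric]
    by (auto simp: prod.distrib mult_ac)
  also have "\<dots> \<le> 0"
  proof (rule mult_nonpos_nonneg[OF mult_nonpos_nonneg])
    show "left_point - t (L+1) \<le> 0" using left_point_below first_in_block by fastforce
    show "(lam + cauchy left_point) * \<mu> (L+1) \<ge> 0"
      using cauchy_left_point mu_pos[OF first_in_block] by simp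
  qed (use same_sign in simp)
  finally show ?thesis .
qed

lemma boole_poly_roots:
  "\<exists>r. \<forall>k\<in>J. poly boole_poly (r k) = 0 \<and> r k < t k \<and> (k \<noteq> L+1 \<longrightarrow> t (k-1) < r k)"
proof -
  have "\<exists>x. poly boole_poly x = 0 \<and> x < t k \<and> (k \<noteq> L+1 \<longrightarrow> t (k-1) < x)" if k: "k \<in> J" for k
  proof (cases "k = L+1")
    case True
    have below: "left_point < t (L+1)" using left_point_below first_in_block .
    show ?thesis
    proof (cases "poly boole_poly left_point = 0")
      case False
      then have "poly boole_poly left_point * poly boole_poly (t (L+1)) < 0"
        using boole_poly_sign_change_first boole_poly_at_pole_nonzero[OF first_in_block]
        by (simp add: order.order_iff_strict)
      then obtain x where "x < t (L+1)" "poly boole_poly x = 0" using poly_IVT[OF below] by blast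
      then show ?thesis using True by auto
    qed (use True below in auto)
  next
    case False
    then have "k - 1 \<in> J" using k by auto
    then obtain x where "t (k-1) < x" "x < t k" "poly boole_poly x = 0"
      using poly_IVT[of "t (k-1)" "t k"] boole_poly_sign_change[OF k] t_less[of "k-1" k] by auto
    then show ?thesis by auto
  qed
  then have "\<forall>k\<in>J. \<exists>x. poly boole_poly x = 0 \<and> x < t k \<and> (k \<noteq> L+1 \<longrightarrow> t (k-1) < x)"
    by blast
  then show ?thesis by (rule bchoice)
qed

lemma boole_poly_coeffs:
  "degree boole_poly \<le> card J" "coeff boole_poly (card J) = lam"
  "coeff boole_poly (card J - 1) = - lam * (\<Sum>k\<in>J. t k) + mass"
proof -
  define m where "m = card J"
  have m_pos: "m > 0" unfolding m_def using L_less_U by simp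
  note P = prod_linear_factors[of J t]
  have Pk: "degree (\<Prod>j\<in>J-{k}. [:-t j, 1:]) = m - 1" "coeff (\<Prod>j\<in>J-{k}. [:-t j, 1:]) (m-1) = 1"
    if "k \<in> J" for k
    using prod_linear_factors[of "J - {k}" t] that unfolding m_def by auto
  have Pk_high: "coeff (\<Prod>j\<in>J-{k}. [:-t j, 1:]) n = 0" if "k \<in> J" "n \<ge> m" for k n
    using Pk(1)[OF that(1)] that m_pos by (intro coeff_eq_0) auto
  have coeff: "coeff boole_poly n = lam * coeff (\<Prod>j\<in>J. [:-t j, 1:]) n
      + (\<Sum>k\<in>J. \<mu> k * coeff (\<Prod>j\<in>J-{k}. [:-t j, 1:]) n)" for n
    unfolding boole_poly_def by (simp add: coeff_sum)
  show "degree boole_poly \<le> card J"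
    by (rule degree_le) (use coeff Pk_high P(1) in \<open>auto simp: coeff_eq_0 m_def\<close>)
  show "coeff boole_poly (card J) = lam" using coeff Pk_high P(2) by (simp add: m_def)
  show "coeff boole_poly (card J - 1) = - lam * (\<Sum>k\<in>J. t k) + mass"
    using coeff Pk(2) P(3) L_less_U by (simp add: m_def mass_def)
qed

theorem boole_identity:
  "\<exists>r. (\<forall>k\<in>J. r k < t k \<and> (k \<noteq> L+1 \<longrightarrow> t (k-1) < r k) \<and> cauchy (r k) = - lam)
     \<and> (\<Sum>k\<in>J. t k - r k) = mass / lam"
proof -
  obtain r where "\<forall>k\<in>J. poly boole_poly (r k) = 0 \<and> r k < t k \<and> (k \<noteq> L+1 \<longrightarrow> t (k-1) < r k)"
    using boole_poly_roots by blast
  then have r: "\<And>k. k \<in> J \<Longrightarrow> poly boole_poly (r k) = 0 \<and> r k < t k \<and> (k \<noteq> L+1 \<longrightarrow> t (k-1) < r k)"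
    by blast
  have r_mono: "r i < r j" if ij: "i \<in> J" "j \<in> J" "i < j" for i j
  proof -
    have "j \<noteq> L+1" using ij by auto
    then have "t (j-1) < r j" using r[OF ij(2)] by blast
    moreover have "t i \<le> t (j-1)" using ij by (intro t_le) auto
    ultimately show ?thesis using r[OF ij(1)] by linarith
  qed
  have r_inj: "inj_on r J"
  proof (rule inj_onI)
    fix i j assume "i \<in> J" "j \<in> J" "r i = r j"
    then show "i = j" using r_mono[of i j] r_mono[of j i] by (cases i j rule: linorder_cases) auto
  qed
  have r_off_poles: "r k \<noteq> t j" if kj: "k \<in> J" "j \<in> J" for k j
  proof (cases "k \<le> j")
    case True
    then show ?thesis using r[OF kj(1)] t_le[of k j] by linarith
  next
    case False
    then have "k \<noteq> L+1" "t j \<le> t (k-1)" using kj by (auto intro: t_le)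
    then show ?thesis using r[OF kj(1)] by force
  qed
  have cauchy_r: "cauchy (r k) = - lam" if k: "k \<in> J" for k
  proof -
    have "(\<Prod>j\<in>J. r k - t j) \<noteq> 0" using r_off_poles[OF k] by (auto simp: prod_zero_iff)
    moreover have "(\<Prod>j\<in>J. r k - t j) * (lam + cauchy (r k)) = 0"
      using poly_boole_poly_off_poles[of "r k"] r_off_poles[OF k] r[OF k] by auto
    ultimately show ?thesis by simp
  qed
  have "- lam * (\<Sum>k\<in>J. t k) + mass = - lam * (\<Sum>k\<in>J. r k)"
    using vieta_second_coeff[OF _ _ r_inj boole_poly_coeffs(1,2)] r boole_poly_coeffs(3) L_less_U
    by auto
  then have "(\<Sum>k\<in>J. t k - r k) = mass / lam"
    using lam_pos by (simp add: sum_subtractf field_simps)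
  then show ?thesis using r cauchy_r by blast
qed

theorem boole_count:
  assumes S: "S \<subseteq> {L<..<U}"
    and x: "\<And>n. n \<in> S \<Longrightarrow> t n < x n \<and> x n < t (n+1) \<and> cauchy (x n) \<le> - lam"
  shows "(\<Sum>n\<in>S. t (n+1) - x n) \<le> mass / lam"
proof -
  obtain r where r_all: "\<forall>k\<in>J. r k < t k \<and> (k \<noteq> L+1 \<longrightarrow> t (k-1) < r k) \<and> cauchy (r k) = - lam"
    and total: "(\<Sum>k\<in>J. t k - r k) = mass / lam"
    using boole_identity by blast
  have r: "r k < t k \<and> (k \<noteq> L+1 \<longrightarrow> t (k-1) < r k) \<and> cauchy (r k) = - lam" if "k \<in> J" for k
    using r_all that by blast
  have closer: "t (n+1) - x n \<le> t (n+1) - r (n+1)" if n: "n \<in> S" for n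
  proof (rule ccontr)
    assume "\<not> ?thesis"
    then have "x n < r (n+1)" by simp
    moreover have "n+1 \<in> J" "n+1 \<noteq> L+1" using S n by auto
    then have "t n < r (n+1)" "r (n+1) < t (n+1)" "cauchy (r (n+1)) = - lam"
      using r[of "n+1"] by auto
    ultimately have "cauchy (r (n+1)) < cauchy (x n)"
      unfolding cauchy_def using x[OF n] L_less_U
      by (intro cauchy_sum_strict_anti[OF t_mono mu_pos, where n = n]) auto
    then show False using \<open>cauchy (r (n+1)) = - lam\<close> x[OF n] by linarith
  qed
  have "(\<Sum>n\<in>S. t (n+1) - x n) \<le> (\<Sum>n\<in>S. t (n+1) - r (n+1))"
    by (rule sum_mono) (rule closer)
  also have "\<dots> = (\<Sum>k\<in>(\<lambda>n. n+1) ` S. t k - r k)" by (simp add: sum.reindex)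
  also have "\<dots> \<le> (\<Sum>k\<in>J. t k - r k)"
    by (rule sum_mono2) (use S r in \<open>auto simp: less_imp_le\<close>)
  finally show ?thesis using total by simp
qed

end

lemma finite_abs_le: "finite {n\<in>A. real_of_int \<bar>n\<bar> \<le> R}"
proof (rule finite_subset)
  show "{n\<in>A. real_of_int \<bar>n\<bar> \<le> R} \<subseteq> {-\<lceil>R\<rceil>..\<lceil>R\<rceil>}"
  proof
    fix n :: int assume "n \<in> {n\<in>A. real_of_int \<bar>n\<bar> \<le> R}"
    then have "\<bar>n\<bar> \<le> \<lceil>R\<rceil>" by simp linarith
    then show "n \<in> {-\<lceil>R\<rceil>..\<lceil>R\<rceil>}" by auto
  qed
qed simp

lemma zero_density_subset:
  assumes "A \<subseteq> B" "zero_density B"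
  shows "zero_density A"
  unfolding zero_density_def
proof (rule tendsto_sandwich[of "\<lambda>R. 0" _ _ "\<lambda>R::real. real (card {n\<in>B. real_of_int \<bar>n\<bar> \<le> R}) / R"])
  show "\<forall>\<^sub>F R in at_top. 0 \<le> real (card {n\<in>A. real_of_int \<bar>n\<bar> \<le> R}) / R"
    using eventually_ge_at_top[of "0::real"] by eventually_elim simp
  show "\<forall>\<^sub>F R in at_top. real (card {n\<in>A. real_of_int \<bar>n\<bar> \<le> R}) / R
      \<le> real (card {n\<in>B. real_of_int \<bar>n\<bar> \<le> R}) / R"
    using eventually_ge_at_top[of "0::real"]
  proof eventually_elim
    case (elim R)
    have "card {n\<in>A. real_of_int \<bar>n\<bar> \<le> R} \<le> card {n\<in>B. real_of_int \<bar>n\<bar> \<le> R}"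
      by (rule card_mono[OF finite_abs_le]) (use assms(1) in auto)
    then show ?case using elim by (intro divide_right_mono) auto
  qed
qed (use assms(2) zero_density_def in auto)

(* Zero density is preserved by the reflection n \<mapsto> -n-1 exchanging the two half-lines,
   since it moves every integer by at most 1 in absolute value. *)
lemma zero_density_reflect:
  assumes "zero_density A"
  shows "zero_density ((\<lambda>m. - m - 1) ` A)"
proof -
  define g where "g R = real (card {n\<in>A. real_of_int \<bar>n\<bar> \<le> R}) / R" for R :: real
  have g0: "(g \<longlongrightarrow> 0) at_top" using assms unfolding zero_density_def g_def by simp
  have "((\<lambda>R. g (R + 1)) \<longlongrightarrow> 0) at_top"
    by (rule filterlim_compose[OF g0]) real_asymp
  moreover have "((\<lambda>R::real. (R + 1) / R) \<longlongrightarrow> 1) at_top" by real_asymp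
  ultimately have lim: "((\<lambda>R. g (R + 1) * ((R + 1) / R)) \<longlongrightarrow> 0 * 1) at_top"
    by (rule tendsto_mult)
  show ?thesis
    unfolding zero_density_def
  proof (rule tendsto_sandwich[of "\<lambda>R. 0" _ _ "\<lambda>R. g (R + 1) * ((R + 1) / R)"])
    show "\<forall>\<^sub>F R in at_top. 0 \<le> real (card {n\<in>(\<lambda>m. - m - 1) ` A. real_of_int \<bar>n\<bar> \<le> R}) / R"
      using eventually_ge_at_top[of "0::real"] by eventually_elim simp
    show "\<forall>\<^sub>F R in at_top. real (card {n\<in>(\<lambda>m. - m - 1) ` A. real_of_int \<bar>n\<bar> \<le> R}) / R
        \<le> g (R + 1) * ((R + 1) / R)"
      using eventually_gt_at_top[of "0::real"]
    proof eventually_elim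
      case (elim R)
      have sub: "{n\<in>(\<lambda>m. - m - 1) ` A. real_of_int \<bar>n\<bar> \<le> R}
          \<subseteq> (\<lambda>m. - m - 1) ` {n\<in>A. real_of_int \<bar>n\<bar> \<le> R + 1}"
      proof
        fix n assume "n \<in> {n\<in>(\<lambda>m. - m - 1) ` A. real_of_int \<bar>n\<bar> \<le> R}"
        then obtain m where m: "m \<in> A" "n = - m - 1" "real_of_int \<bar>n\<bar> \<le> R" by auto
        then have "real_of_int \<bar>m\<bar> \<le> R + 1" by linarith
        then show "n \<in> (\<lambda>m. - m - 1) ` {n\<in>A. real_of_int \<bar>n\<bar> \<le> R + 1}" using m by auto
      qed
      have "card {n\<in>(\<lambda>m. - m - 1) ` A. real_of_int \<bar>n\<bar> \<le> R}
          \<le> card ((\<lambda>m. - m - 1) ` {n\<in>A. real_of_int \<bar>n\<bar> \<le> R + 1})"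
        by (rule card_mono[OF finite_imageI[OF finite_abs_le] sub])
      also have "\<dots> \<le> card {n\<in>A. real_of_int \<bar>n\<bar> \<le> R + 1}" by (rule card_image_le[OF finite_abs_le])
      finally have c: "real (card {n\<in>(\<lambda>m. - m - 1) ` A. real_of_int \<bar>n\<bar> \<le> R})
          \<le> real (card {n\<in>A. real_of_int \<bar>n\<bar> \<le> R + 1})" by simp
      have "g (R + 1) * ((R + 1) / R) = real (card {n\<in>A. real_of_int \<bar>n\<bar> \<le> R + 1}) / R"
        using elim unfolding g_def by (simp add: divide_simps)
      then show ?case using c elim by (simp add: divide_right_mono)
    qed
  qed (use lim in auto)
qed

lemma dyadic_count:
  fixes S :: "int set" and \<epsilon> :: real and N1 :: int
  assumes N1: "N1 \<ge> 1" and eps: "\<epsilon> \<ge> 0"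
    and blk: "\<And>N. N \<ge> N1 \<Longrightarrow> real (card (S \<inter> {N..2*N+1})) \<le> \<epsilon> * N"
  shows "R \<ge> 0 \<Longrightarrow> real (card (S \<inter> {N1..R})) \<le> 2 * \<epsilon> * R"
proof (induction "nat R" arbitrary: R rule: less_induct)
  case less
  show ?case
  proof (cases "R < N1")
    case True
    then have "S \<inter> {N1..R} = {}" by auto
    then show ?thesis using less.prems eps by simp
  next
    case False
    show ?thesis
    proof (cases "R \<le> 2 * N1 + 1")
      case True
      have "card (S \<inter> {N1..R}) \<le> card (S \<inter> {N1..2*N1+1})"
        by (rule card_mono) (use True in auto)
      then have "real (card (S \<inter> {N1..R})) \<le> \<epsilon> * N1" using blk[of N1] by linarith
      also have "\<dots> \<le> 2 * \<epsilon> * R"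
      proof -
        have "real_of_int N1 \<le> real_of_int R" "real_of_int R \<ge> 0" using False less.prems by auto
        then have "\<epsilon> * N1 \<le> \<epsilon> * R" "\<epsilon> * R \<ge> 0" using eps by (auto intro: mult_left_mono)
        then show ?thesis by linarith
      qed
      finally show ?thesis .
    next
      case big: False
      define M where "M = R div 2"
      have M1: "M \<ge> N1 + 1" "2 * M \<le> R" "R \<le> 2 * M + 1" using big unfolding M_def by auto
      have "nat (M - 1) < nat R" using M1 N1 by auto
      then have IH: "real (card (S \<inter> {N1..M-1})) \<le> 2 * \<epsilon> * (M - 1)"
        using less.hyps[of "M - 1"] M1 N1 by auto
      have "S \<inter> {N1..R} \<subseteq> (S \<inter> {N1..M-1}) \<union> (S \<inter> {M..2*M+1})" using M1 by auto
      then have "card (S \<inter> {N1..R}) \<le> card ((S \<inter> {N1..M-1}) \<union> (S \<inter> {M..2*M+1}))"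
        by (intro card_mono) auto
      also have "\<dots> \<le> card (S \<inter> {N1..M-1}) + card (S \<inter> {M..2*M+1})" by (rule card_Un_le)
      finally have "real (card (S \<inter> {N1..R})) \<le> real (card (S \<inter> {N1..M-1})) + real (card (S \<inter> {M..2*M+1}))"
        by linarith
      also have "\<dots> \<le> 2 * \<epsilon> * (M - 1) + \<epsilon> * M" using IH blk[of M] M1 by linarith
      also have "\<dots> \<le> 2 * \<epsilon> * R"
      proof -
        have "3 * M \<le> 2 * R" using M1 N1 by linarith
        then have "real_of_int (3 * M) \<le> real_of_int (2 * R)" by (simp only: of_int_le_iff)
        then have "0 \<le> \<epsilon> * (2 * real_of_int R - 3 * real_of_int M)" using eps by (intro mult_nonneg_nonneg) auto
        then show ?thesis using eps by (simp add: algebra_simps)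
      qed
      finally show ?thesis .
    qed
  qed
qed

lemma count_from_blocks:
  fixes S :: "int set" and R :: real
  assumes low: "S \<subseteq> {b..}" and N1: "N1 \<ge> 1" and eps: "\<epsilon> \<ge> 0"
    and blk: "\<And>N. N \<ge> N1 \<Longrightarrow> real (card (S \<inter> {N..2*N+1})) \<le> \<epsilon> * N" and R: "R \<ge> 0"
  shows "real (card {n\<in>S. real_of_int \<bar>n\<bar> \<le> R}) \<le> real (card {b..N1-1}) + 2 * \<epsilon> * R"
proof -
  define fR where "fR = \<lfloor>R\<rfloor>"
  have fR: "real_of_int fR \<le> R" "fR \<ge> 0" unfolding fR_def using R by auto
  have "{n\<in>S. real_of_int \<bar>n\<bar> \<le> R} \<subseteq> {b..N1-1} \<union> (S \<inter> {N1..fR})"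
  proof
    fix n assume n: "n \<in> {n\<in>S. real_of_int \<bar>n\<bar> \<le> R}"
    then have "n \<ge> b" "n \<le> fR" using low unfolding fR_def by auto linarith
    then show "n \<in> {b..N1-1} \<union> (S \<inter> {N1..fR})" using n by auto
  qed
  then have "card {n\<in>S. real_of_int \<bar>n\<bar> \<le> R} \<le> card ({b..N1-1} \<union> (S \<inter> {N1..fR}))"
    by (rule card_mono[rotated]) auto
  also have "\<dots> \<le> card {b..N1-1} + card (S \<inter> {N1..fR})" by (rule card_Un_le)
  finally have "real (card {n\<in>S. real_of_int \<bar>n\<bar> \<le> R}) \<le> card {b..N1-1} + real (card (S \<inter> {N1..fR}))"
    by linarith
  also have "\<dots> \<le> card {b..N1-1} + 2 * \<epsilon> * real_of_int fR"
    using dyadic_count[OF N1 eps blk fR(2)] by simp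
  also have "\<dots> \<le> card {b..N1-1} + 2 * \<epsilon> * R" using fR eps by (simp add: mult_left_mono)
  finally show ?thesis .
qed

lemma zero_density_from_blocks:
  fixes S :: "int set"
  assumes low: "S \<subseteq> {b..}"
    and blk: "\<And>\<epsilon>::real. \<epsilon> > 0 \<Longrightarrow> \<exists>N1\<ge>1. \<forall>N\<ge>N1. real (card (S \<inter> {N..2*N+1})) \<le> \<epsilon> * real_of_int N"
  shows "zero_density S"
  unfolding zero_density_def
proof (rule tendstoI)
  fix e :: real assume e: "e > 0"
  obtain N1 where N1: "N1 \<ge> 1" "\<And>N. N \<ge> N1 \<Longrightarrow> real (card (S \<inter> {N..2*N+1})) \<le> (e/4) * real_of_int N"
    using blk[of "e/4"] e by auto
  define c0 where "c0 = real (card {b..N1-1})"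
  show "\<forall>\<^sub>F R in at_top. dist (real (card {n\<in>S. real_of_int \<bar>n\<bar> \<le> R}) / R) 0 < e"
    using eventually_ge_at_top[of "max 1 (4 * c0 / e + 1)"]
  proof eventually_elim
    case (elim R)
    then have R: "R \<ge> 1" "4 * c0 < e * R" using e by (auto simp: field_simps)
    have "real (card {n\<in>S. real_of_int \<bar>n\<bar> \<le> R}) \<le> c0 + 2 * (e/4) * R"
      unfolding c0_def using count_from_blocks[OF low N1(1) _ N1(2)] e R by simp
    also have "\<dots> < e * R" using R c0_def by simp
    finally show ?case using R by (simp add: divide_less_eq)
  qed
qed

lemma gap_sum_summable:
  fixes t \<mu> :: "int \<Rightarrow> real"
  assumes tm: "strict_mono t" and mu: "\<And>k. \<mu> k \<ge> 0" and ms: "\<mu> summable_on UNIV"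
    and x: "t n < x" "x < t (n+1)"
  shows "(\<lambda>k. \<mu> k / (x - t k)) summable_on A"
proof -
  define d where "d = min (x - t n) (t (n+1) - x)"
  have d: "d > 0" using x unfolding d_def by auto
  have dist: "\<bar>x - t k\<bar> \<ge> d" for k
  proof (cases "k \<le> n")
    case True then have "t k \<le> t n" using tm by (simp add: strict_mono_less_eq)
    then show ?thesis unfolding d_def using x by auto
  next
    case False then have "t (n+1) \<le> t k" using tm by (simp add: strict_mono_less_eq)
    then show ?thesis unfolding d_def using x by auto
  qed
  have "(\<lambda>k. \<mu> k * (1/d)) summable_on UNIV" using ms by (rule summable_on_cmult_left)
  then have "(\<lambda>k. norm (\<mu> k * (1/d))) summable_on UNIV"
    by (rule Infinite_Sum.summable_on_iff_abs_summable_on_real[THEN iffD1])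
  then have "(\<lambda>k. norm (\<mu> k / (x - t k))) summable_on UNIV"
  proof (rule Infinite_Sum.abs_summable_on_comparison_test)
    fix k :: int
    have "\<bar>\<mu> k / (x - t k)\<bar> = \<mu> k / \<bar>x - t k\<bar>" using mu[of k] by (simp add: abs_div_pos)
    also have "\<dots> \<le> \<mu> k / d" using mu[of k] dist[of k] d by (intro divide_left_mono) auto
    finally show "norm (\<mu> k / (x - t k)) \<le> norm (\<mu> k * (1/d))" using mu[of k] d by simp
  qed
  then have "(\<lambda>k. \<mu> k / (x - t k)) summable_on UNIV"
    by (rule Infinite_Sum.summable_on_iff_abs_summable_on_real[THEN iffD2])
  then show ?thesis by (rule summable_on_subset_banach) simp
qed

lemma summable_tail_small:
  fixes \<mu> :: "int \<Rightarrow> real"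
  assumes mu: "\<And>k. \<mu> k \<ge> 0" and ms: "\<mu> summable_on UNIV" and e: "e > 0"
  shows "\<exists>M. \<forall>A. A \<inter> {-M..M} = {} \<longrightarrow> infsum \<mu> A \<le> e"
proof -
  obtain F where F: "finite F" "dist (sum \<mu> F) (infsum \<mu> UNIV) \<le> e"
    using infsum_finite_approximation[OF ms e] by auto
  obtain M where M: "\<And>k. k \<in> F \<Longrightarrow> \<bar>k\<bar> \<le> M"
  proof
    fix k assume "k \<in> F"
    then show "\<bar>k\<bar> \<le> Max (insert 0 (abs ` F))" using F(1) by (intro Max_ge) auto
  qed
  show ?thesis
  proof (intro exI allI impI)
    fix A assume A: "A \<inter> {-M..M} = {}"
    have AF: "A \<inter> F = {}" using A M by fastforce
    have sA: "\<mu> summable_on A" using ms by (rule summable_on_subset_banach) simp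
    have "infsum \<mu> (A \<union> F) = infsum \<mu> A + sum \<mu> F"
      using infsum_Un_disjoint[OF sA summable_on_finite[OF F(1)] AF] F(1) by simp
    moreover have "infsum \<mu> (A \<union> F) \<le> infsum \<mu> UNIV"
      by (rule infsum_mono2) (use ms mu in \<open>auto intro: summable_on_subset_banach\<close>)
    ultimately show "infsum \<mu> A \<le> e" using F(2) by (auto simp: dist_real_def)
  qed
qed

lemma telescope:
  fixes t :: "int \<Rightarrow> real"
  shows "i \<le> j \<Longrightarrow> t j - t i = (\<Sum>k\<in>{i..<j}. t (k+1) - t k)"
proof (induction j rule: int_ge_induct)
  case base then show ?case by simp
next
  case (step j)
  have "{i..<j+1} = insert j {i..<j}" using step by auto
  then show ?case using step by simp
qed

lemma increments_upper:
  fixes t :: "int \<Rightarrow> real"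
  assumes "i \<le> j" "\<And>k. i \<le> k \<Longrightarrow> k < j \<Longrightarrow> t (k+1) - t k \<le> h"
  shows "t j - t i \<le> real_of_int (j - i) * h"
proof -
  have "t j - t i = (\<Sum>k\<in>{i..<j}. t (k+1) - t k)" using telescope assms(1) by blast
  also have "\<dots> \<le> (\<Sum>k\<in>{i..<j}. h)" by (rule sum_mono) (use assms in auto)
  also have "\<dots> = real_of_int (j - i) * h" using assms(1) by simp
  finally show ?thesis .
qed

lemma increments_lower:
  fixes t :: "int \<Rightarrow> real"
  assumes "i \<le> j" "\<And>k. i \<le> k \<Longrightarrow> k < j \<Longrightarrow> t (k+1) - t k \<ge> h"
  shows "t j - t i \<ge> real_of_int (j - i) * h"
proof -
  have "t j - t i = (\<Sum>k\<in>{i..<j}. t (k+1) - t k)" using telescope assms(1) by blast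
  moreover have "(\<Sum>k\<in>{i..<j}. h) \<le> (\<Sum>k\<in>{i..<j}. t (k+1) - t k)" by (rule sum_mono) (use assms in auto)
  moreover have "(\<Sum>k\<in>{i..<j}. h) = real_of_int (j - i) * h" using assms(1) by simp
  ultimately show ?thesis by linarith
qed

locale interlaced_zeros =
  fixes t \<mu> s :: "int \<Rightarrow> real"
  assumes t_mono: "strict_mono t"
    and t_top: "filterlim t at_top at_top" and t_bot: "filterlim t at_bot at_bot"
    and mu_pos: "\<And>n. \<mu> n > 0" and mu_summable: "\<mu> summable_on UNIV"
    and s_gap: "\<And>n. t n < s n \<and> s n < t (n+1)"
    and s_zero: "\<And>n. (\<Sum>\<^sub>\<infinity>k. \<mu> k / (s n - t k)) = 0"
begin

lemma t_less: "i < j \<Longrightarrow> t i < t j"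
  using t_mono by (simp add: strict_mono_less)

lemma t_le: "i \<le> j \<Longrightarrow> t i \<le> t j"
  using t_mono by (simp add: strict_mono_less_eq)

lemma mu_nonneg: "\<mu> k \<ge> 0"
  using mu_pos less_imp_le by blast

lemma cauchy_summable:
  assumes "t n < x" "x < t (n+1)"
  shows "(\<lambda>k. \<mu> k / (x - t k)) summable_on A"
  using gap_sum_summable[OF t_mono _ mu_summable assms] mu_nonneg by blast

(* The poles left of a point x contribute positively; keeping only the pole t 0 gives a
   lower bound. *)
lemma left_part_lower:
  assumes x: "t n < x" "x < t (n+1)" and L: "0 \<le> L" "L \<le> n"
  shows "\<mu> 0 / (x - t 0) \<le> (\<Sum>\<^sub>\<infinity>k\<in>{..L}. \<mu> k / (x - t k))"
proof -
  have "(\<Sum>k\<in>{0}. \<mu> k / (x - t k)) \<le> (\<Sum>\<^sub>\<infinity>k\<in>{..L}. \<mu> k / (x - t k))"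
  proof (rule finite_sum_le_infsum[OF cauchy_summable[OF x]])
    fix k assume "k \<in> {..L} - {0}"
    then have "t k < x" using t_le[of k n] x L by auto
    then show "\<mu> k / (x - t k) \<ge> 0" using mu_nonneg[of k] by simp
  qed (use L in auto)
  then show ?thesis by simp
qed

lemma right_part_lower:
  assumes x: "t n < x" "x < t (n+1)" and nU: "n < U"
  shows "- (\<Sum>\<^sub>\<infinity>k\<in>{U<..}. \<mu> k) / (t (U+1) - x) \<le> (\<Sum>\<^sub>\<infinity>k\<in>{U<..}. \<mu> k / (x - t k))"
proof -
  define D where "D = t (U+1) - x"
  have D: "D > 0" using x t_le[of "n+1" "U+1"] nU unfolding D_def by auto
  have tail: "\<mu> summable_on {U<..}" using mu_summable by (rule summable_on_subset_banach) simp
  have "(\<Sum>\<^sub>\<infinity>k\<in>{U<..}. \<mu> k * (- 1 / D)) \<le> (\<Sum>\<^sub>\<infinity>k\<in>{U<..}. \<mu> k / (x - t k))"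
  proof (rule infsum_mono[OF summable_on_cmult_left[OF tail] cauchy_summable[OF x]])
    fix k assume "k \<in> {U<..}"
    then have "x - t k \<le> - D" using t_le[of "U+1" k] unfolding D_def by auto
    then have "inverse (- D) \<le> inverse (x - t k)" using D by (intro le_imp_inverse_le_neg) auto
    then have "\<mu> k * inverse (- D) \<le> \<mu> k * inverse (x - t k)"
      using mu_nonneg[of k] by (rule mult_left_mono)
    then show "\<mu> k * (- 1 / D) \<le> \<mu> k / (x - t k)" by (simp add: divide_inverse)
  qed
  moreover have "(\<Sum>\<^sub>\<infinity>k\<in>{U<..}. \<mu> k * (- 1 / D)) = (\<Sum>\<^sub>\<infinity>k\<in>{U<..}. \<mu> k) * (- 1 / D)"
    by (rule infsum_cmult_left[OF tail])
  ultimately show ?thesis unfolding D_def by simp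
qed

(* Since the full sum vanishes at s n, the finite block of poles around n must make the
   sum negative, up to the far-right tail. *)
lemma block_sum_upper:
  assumes LU: "0 \<le> L" "L \<le> n" "n < U"
  shows "(\<Sum>k\<in>{L<..U}. \<mu> k / (s n - t k))
      \<le> - \<mu> 0 / (s n - t 0) + (\<Sum>\<^sub>\<infinity>k\<in>{U<..}. \<mu> k) / (t (U+1) - s n)"
proof -
  define g where "g k = \<mu> k / (s n - t k)" for k
  have gs: "g summable_on A" for A unfolding g_def using cauchy_summable s_gap by blast
  have "infsum g ({L<..U} \<union> {U<..}) = infsum g {L<..U} + infsum g {U<..}"
    by (rule infsum_Un_disjoint[OF gs gs]) auto
  moreover have "infsum g ({..L} \<union> ({L<..U} \<union> {U<..})) = infsum g {..L} + infsum g ({L<..U} \<union> {U<..})"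
    by (rule infsum_Un_disjoint[OF gs gs]) (use LU in auto)
  ultimately have "infsum g ({..L} \<union> ({L<..U} \<union> {U<..})) = infsum g {..L} + (infsum g {L<..U} + infsum g {U<..})"
    by simp
  moreover have "{..L} \<union> ({L<..U} \<union> {U<..}) = UNIV" using LU by auto
  ultimately have "infsum g UNIV = infsum g {..L} + (infsum g {L<..U} + infsum g {U<..})" by simp
  then have "infsum g {..L} + sum g {L<..U} + infsum g {U<..} = 0"
    using s_zero[of n] unfolding g_def by simp
  then show ?thesis
    using left_part_lower[OF _ _ LU(1,2)] right_part_lower[OF _ _ LU(3)] s_gap[of n]
    unfolding g_def by fastforce
qed

end

locale regular_right = interlaced_zeros +
  fixes a :: nat and \<rho> C :: real
  assumes C_pos: "C > 0"
    and comparable: "\<And>n k. 0 \<le> n \<Longrightarrow> n \<le> k \<Longrightarrow> k \<le> 2*n \<Longrightarrow>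
        t (k+1) - t k \<le> C * (t (n+1) - t n) \<and> t (n+1) - t n \<le> C * (t (k+1) - t k)"
    and a_ge: "a \<ge> 2" and rho_gt: "\<rho> > 1"
    and growth: "\<And>n. n > 0 \<Longrightarrow> \<rho> * \<bar>t n\<bar> \<le> \<bar>t (int a * n)\<bar>"
begin

definition gap :: "int \<Rightarrow> real" where
  "gap k = t (k+1) - t k"

lemma gap_pos: "gap k > 0"
  unfolding gap_def using t_less[of k "k+1"] by simp

lemma C_ge_1: "C \<ge> 1"
proof -
  have "gap 0 \<le> C * gap 0" using comparable[of 0 0] unfolding gap_def by simp
  then show ?thesis using gap_pos[of 0] by (simp add: mult_le_cancel_right1)
qed

lemma gap_dyadic:
  "0 \<le> N \<Longrightarrow> N \<le> k \<Longrightarrow> k \<le> 2^j * N \<Longrightarrow> gap k \<le> C^j * gap N \<and> gap N \<le> C^j * gap k"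
proof (induction j arbitrary: k)
  case (Suc j)
  have mono: "C^j * g \<le> C^Suc j * g" if "g > 0" for g
    using C_ge_1 that by (intro mult_right_mono power_increasing) auto
  show ?case
  proof (cases "k \<le> 2^j * N")
    case True
    then show ?thesis using Suc mono[OF gap_pos[of N]] mono[OF gap_pos[of k]] by fastforce
  next
    case False
    define m where "m = 2^j * N"
    have m: "0 \<le> m" "m \<le> k" "k \<le> 2 * m" using Suc.prems False unfolding m_def by auto
    have step: "gap k \<le> C * gap m" "gap m \<le> C * gap k"
      using comparable[OF m] unfolding gap_def by auto
    have "1 * N \<le> m" unfolding m_def using Suc.prems by (intro mult_right_mono) auto
    then have IH: "gap m \<le> C^j * gap N" "gap N \<le> C^j * gap m"
      using Suc.IH[of m] Suc.prems unfolding m_def by auto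
    have "C * gap m \<le> C * (C^j * gap N)" "C^j * gap m \<le> C^j * (C * gap k)"
      using IH(1) step(2) C_pos by (auto intro: mult_left_mono)
    then show ?thesis using step IH(2) by (simp add: mult_ac)
  qed
qed simp

lemma gap_upper: "1 \<le> N \<Longrightarrow> N \<le> k \<Longrightarrow> k \<le> 2*N+2 \<Longrightarrow> gap k \<le> C^a * gap N"
proof -
  assume k: "1 \<le> N" "N \<le> k" "k \<le> 2*N+2"
  have "(2::int)^2 \<le> 2^a" using a_ge by (intro power_increasing) auto
  then have "4 * N \<le> 2^a * N" using k by (intro mult_right_mono) auto
  then have "k \<le> 2^a * N" using k by linarith
  then show ?thesis using gap_dyadic[of N k a] k by auto
qed

lemma gap_lower: "1 \<le> N \<Longrightarrow> N \<le> k \<Longrightarrow> k \<le> 4*N+4 \<Longrightarrow> gap N \<le> C^3 * gap k"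
  using gap_dyadic[of N k 3] by auto

definition K :: real where
  "K = (real a - 1) * C^a / (\<rho> - 1) + 3 * C^a"

lemma K_pos: "K > 0"
proof -
  have "(real a - 1) * C^a / (\<rho> - 1) \<ge> 0" using a_ge rho_gt C_pos by simp
  moreover have "C^a > 0" using C_pos by simp
  ultimately show ?thesis unfolding K_def by linarith
qed

(* The geometric growth of t forces t N = O(N * gap N) once t N > 0: between N and a N
   there are (a-1) N gaps, each at most C^a gap N, while t grows by the factor \<rho>. *)
lemma t_bounded_by_gaps:
  assumes N: "N \<ge> 1" and tN: "t N > 0"
  shows "t N \<le> (real a - 1) * C^a / (\<rho> - 1) * (N * gap N)"
proof -
  have "int a \<le> 2^a" using less_exp[of a] by (metis of_nat_less_iff of_nat_numeral of_nat_power less_imp_le)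
  then have a2N: "int a * N \<le> 2^a * N" using N by (intro mult_right_mono) auto
  have "2 * N \<le> int a * N" using a_ge N by (intro mult_right_mono) auto
  then have aN: "N < int a * N" using N by linarith
  then have "\<rho> * t N \<le> t (int a * N)" using growth[of N] N tN t_less[OF aN] by simp
  moreover have "t (int a * N) - t N \<le> real_of_int (int a * N - N) * (C^a * gap N)"
  proof (rule increments_upper)
    fix k assume k: "N \<le> k" "k < int a * N"
    then show "t (k+1) - t k \<le> C^a * gap N" using gap_dyadic[of N k a] N a2N unfolding gap_def by auto
  qed (use aN in auto)
  ultimately have "(\<rho> - 1) * t N \<le> (real a - 1) * (N * (C^a * gap N))"
    by (simp add: algebra_simps)
  then show ?thesis using rho_gt by (simp add: field_simps)
qed

lemma t_double_upper:
  assumes N: "N \<ge> 1" and tN: "t N > 0"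
  shows "t (2*N+2) \<le> K * (N * gap N)"
proof -
  have "t (2*N+2) - t N \<le> real_of_int (2*N+2 - N) * (C^a * gap N)"
    by (rule increments_upper) (use gap_upper N in \<open>auto simp: gap_def\<close>)
  also have "\<dots> \<le> 3 * C^a * (N * gap N)"
  proof -
    have "real_of_int (2*N+2 - N) \<le> 3 * N" using N by simp
    moreover have "C^a * gap N > 0" using C_pos gap_pos[of N] by simp
    ultimately have "real_of_int (2*N+2 - N) * (C^a * gap N) \<le> (3 * N) * (C^a * gap N)"
      by (intro mult_right_mono) auto
    then show ?thesis by (simp add: mult_ac)
  qed
  finally show ?thesis using t_bounded_by_gaps[OF N tN] unfolding K_def by (simp add: algebra_simps)
qed

lemma t_spread_lower:
  assumes N: "N \<ge> 1"
  shows "t (4*N+5) - t (2*N+2) \<ge> (N * gap N) / C^3"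
proof -
  have "t (4*N+5) - t (2*N+2) \<ge> real_of_int (4*N+5 - (2*N+2)) * (gap N / C^3)"
  proof (rule increments_lower)
    fix k assume "2*N+2 \<le> k" "k < 4*N+5"
    then have "gap N \<le> C^3 * gap k" using N by (intro gap_lower) auto
    then show "gap N / C^3 \<le> t (k+1) - t k" using C_pos by (simp add: divide_le_eq gap_def mult.commute)
  qed (use N in auto)
  moreover have "real_of_int (4*N+5 - (2*N+2)) * (gap N / C^3) \<ge> (N * gap N) / C^3"
    using N gap_pos[of N] C_pos by (simp add: divide_le_eq field_simps)
  ultimately show ?thesis by linarith
qed

lemma block_sum_negative:
  assumes N: "N \<ge> 1" and tN: "t N > \<bar>t 0\<bar>"
    and tail: "(\<Sum>\<^sub>\<infinity>k\<in>{4*N+4<..}. \<mu> k) \<le> \<mu> 0 / (4 * K * C^3)"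
    and n: "N \<le> n" "n \<le> 2*N+1"
  shows "(\<Sum>k\<in>{N div 2<..4*N+4}. \<mu> k / (s n - t k)) \<le> - (\<mu> 0 / (4 * K * (N * gap N)))"
proof -
  define W where "W = N * gap N"
  define T where "T = (\<Sum>\<^sub>\<infinity>k\<in>{4*N+4<..}. \<mu> k)"
  have W: "W > 0" unfolding W_def using N gap_pos[of N] by simp
  have T: "0 \<le> T" unfolding T_def using mu_nonneg by (simp add: infsum_nonneg)
  have mu0: "\<mu> 0 > 0" using mu_pos by simp
  have C3: "C^3 > 0" using C_pos by simp
  have sn: "t n < s n" "s n < t (n+1)" using s_gap by auto
  have "t N \<le> t n" "t (n+1) \<le> t (2*N+2)" using n by (auto intro: t_le)
  moreover have "t (2*N+2) \<le> K * W" unfolding W_def using t_double_upper N tN by simp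
  ultimately have near: "0 < s n - t 0" "s n - t 0 \<le> 2 * (K * W)" using sn tN by auto
  have far: "W / C^3 \<le> t (4*N+5) - s n"
    using t_spread_lower[OF N] sn \<open>t (n+1) \<le> t (2*N+2)\<close> unfolding W_def by linarith
  have left: "\<mu> 0 / (2 * (K * W)) \<le> \<mu> 0 / (s n - t 0)"
    using near mu0 by (intro divide_left_mono) (auto intro: mult_pos_pos)
  have right: "T / (t (4*N+5) - s n) \<le> \<mu> 0 / (4 * (K * W))"
  proof -
    have "W / C^3 > 0" using W C3 by simp
    then have "T / (t (4*N+5) - s n) \<le> T / (W / C^3)" using far T by (intro frac_le) auto
    also have "\<dots> \<le> \<mu> 0 / (4 * K * C^3) / (W / C^3)"
      using tail \<open>W / C^3 > 0\<close> unfolding T_def by (intro divide_right_mono) auto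
    also have "\<dots> = \<mu> 0 / (4 * (K * W))" using C3 W K_pos by (simp add: field_simps)
    finally show ?thesis .
  qed
  have "(\<Sum>k\<in>{N div 2<..4*N+4}. \<mu> k / (s n - t k)) \<le> - \<mu> 0 / (s n - t 0) + T / (t (4*N+5) - s n)"
    using block_sum_upper[of "N div 2" n "4*N+4"] n N unfolding T_def by (simp add: add.commute)
  also have "\<dots> \<le> - (\<mu> 0 / (4 * (K * W)))"
    using left right by (simp add: field_simps)
  finally show ?thesis unfolding W_def by (simp add: mult.assoc)
qed

lemma block_distance_sum:
  assumes N: "N \<ge> 1" and tN: "t N > \<bar>t 0\<bar>"
    and tail: "(\<Sum>\<^sub>\<infinity>k\<in>{4*N+4<..}. \<mu> k) \<le> \<mu> 0 / (4 * K * C^3)"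
    and S: "S \<subseteq> {N..2*N+1}"
  shows "(\<Sum>n\<in>S. t (n+1) - s n) \<le> (\<Sum>k\<in>{N div 2<..4*N+4}. \<mu> k) * (4 * K * (N * gap N) / \<mu> 0)"
proof -
  define lam where "lam = \<mu> 0 / (4 * K * (N * gap N))"
  have lam: "lam > 0" unfolding lam_def using mu_pos K_pos gap_pos[of N] N by simp
  interpret block: boole_block t \<mu> "N div 2" "4*N+4" lam
    using t_mono mu_pos lam N by unfold_locales auto
  have "(\<Sum>n\<in>S. t (n+1) - s n) \<le> block.mass / lam"
  proof (rule block.boole_count)
    have "{N..2*N+1} \<subseteq> {N div 2<..<4*N+4}" using N by auto
    then show "S \<subseteq> {N div 2<..<4*N+4}" using S by blast
    fix n assume "n \<in> S"
    then show "t n < s n \<and> s n < t (n+1) \<and> block.cauchy (s n) \<le> - lam"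
      using s_gap block_sum_negative[OF N tN tail] S unfolding block.cauchy_def lam_def by auto
  qed
  then show ?thesis unfolding block.mass_def lam_def by (simp add: divide_divide_eq_right)
qed

(* Each n in a dyadic block with t (n+1) - s n \<ge> \<delta> gap n contributes at least
   \<delta> gap N / C^3 to the distance sum, whose bound is o(N gap N) because the block mass
   tends to 0; hence such n form a proportion \<le> \<epsilon> of the block for N large. *)
lemma sparse_in_blocks:
  assumes delta: "\<delta> > 0" and eps: "\<epsilon> > 0"
  shows "\<exists>N1\<ge>1. \<forall>N\<ge>N1. real (card ({n. t (n+1) > 0 \<and> t (n+1) - s n \<ge> \<delta> * (t (n+1) - t n)}
            \<inter> {N..2*N+1})) \<le> \<epsilon> * real_of_int N"
proof -
  define bad where "bad = {n. t (n+1) > 0 \<and> t (n+1) - s n \<ge> \<delta> * (t (n+1) - t n)}"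
  define \<eta> where "\<eta> = \<mu> 0 / (4 * K * C^3)"
  have C3: "C^3 > 0" using C_pos by simp
  have eta: "\<eta> > 0" "\<epsilon> * \<delta> * \<eta> > 0" unfolding \<eta>_def using mu_pos K_pos C3 delta eps by auto
  obtain M1 where M1: "\<And>A. A \<inter> {-M1..M1} = {} \<Longrightarrow> infsum \<mu> A \<le> \<eta>"
    using summable_tail_small[OF mu_nonneg mu_summable eta(1)] by blast
  obtain M2 where M2: "\<And>A. A \<inter> {-M2..M2} = {} \<Longrightarrow> infsum \<mu> A \<le> \<epsilon> * \<delta> * \<eta>"
    using summable_tail_small[OF mu_nonneg mu_summable eta(2)] by blast
  have "\<forall>\<^sub>F n in at_top. \<bar>t 0\<bar> + 1 \<le> t n" using t_top by (simp add: filterlim_at_top)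
  then obtain Nt where Nt: "\<And>N. N \<ge> Nt \<Longrightarrow> \<bar>t 0\<bar> + 1 \<le> t N"
    by (auto simp: eventually_at_top_linorder)
  show ?thesis unfolding bad_def[symmetric]
  proof (intro exI[of _ "max 1 (max Nt (max M1 (2*M2+2)))"] conjI allI impI)
    fix N assume "N \<ge> max 1 (max Nt (max M1 (2*M2+2)))"
    then have N: "N \<ge> 1" "N \<ge> Nt" "N \<ge> M1" "N \<ge> 2*M2+2" by auto
    have tN: "t N > \<bar>t 0\<bar>" using Nt[OF N(2)] by simp
    have tail: "(\<Sum>\<^sub>\<infinity>k\<in>{4*N+4<..}. \<mu> k) \<le> \<mu> 0 / (4 * K * C^3)"
      unfolding \<eta>_def[symmetric] using N(3) by (intro M1) auto
    have "N div 2 \<ge> M2 + 1" using N(4) by presburger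
    then have "{N div 2<..4*N+4} \<inter> {-M2..M2} = {}" by fastforce
    then have mass: "(\<Sum>k\<in>{N div 2<..4*N+4}. \<mu> k) \<le> \<epsilon> * \<delta> * \<eta>"
      using M2[of "{N div 2<..4*N+4}"] by simp
    define S where "S = bad \<inter> {N..2*N+1}"
    define q where "q = \<delta> * (gap N / C^3)"
    have q: "q > 0" unfolding q_def using delta gap_pos[of N] C3 by simp
    have each: "q \<le> t (n+1) - s n" if "n \<in> S" for n
    proof -
      have n: "N \<le> n" "n \<le> 2*N+1" "\<delta> * gap n \<le> t (n+1) - s n"
        using that unfolding S_def bad_def gap_def by auto
      have "gap N \<le> C^3 * gap n" using gap_lower[of N n] N n by auto
      then have "gap N / C^3 \<le> gap n" using C3 by (simp add: divide_le_eq mult.commute)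
      then have "q \<le> \<delta> * gap n" unfolding q_def using delta by (intro mult_left_mono) auto
      then show ?thesis using n by linarith
    qed
    have "real (card S) * q \<le> (\<Sum>n\<in>S. t (n+1) - s n)"
      using sum_mono[of S "\<lambda>n. q" "\<lambda>n. t (n+1) - s n"] each by simp
    also have "\<dots> \<le> (\<Sum>k\<in>{N div 2<..4*N+4}. \<mu> k) * (4 * K * (N * gap N) / \<mu> 0)"
      by (rule block_distance_sum[OF N(1) tN tail]) (auto simp: S_def)
    also have "\<dots> \<le> \<epsilon> * \<delta> * \<eta> * (4 * K * (N * gap N) / \<mu> 0)"
    proof (rule mult_right_mono[OF mass])
      show "0 \<le> 4 * K * (N * gap N) / \<mu> 0"
        using N(1) gap_pos[of N] mu_pos[of 0] K_pos by simp
    qed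
    also have "\<dots> = \<epsilon> * real_of_int N * q"
      unfolding \<eta>_def q_def using mu_pos[of 0] K_pos C3 by (simp add: field_simps)
    finally have "real (card S) * q \<le> \<epsilon> * real_of_int N * q" .
    then show "real (card S) \<le> \<epsilon> * real_of_int N" using q by simp
  qed simp
qed

theorem zero_density_right:
  assumes delta: "\<delta> > 0"
  shows "zero_density {n. t (n+1) > 0 \<and> t (n+1) - s n \<ge> \<delta> * (t (n+1) - t n)}"
proof -
  have "\<forall>\<^sub>F n in at_bot. t n \<le> 0" using t_bot by (simp add: filterlim_at_bot)
  then obtain b where b: "\<And>n. n \<le> b \<Longrightarrow> t n \<le> 0" by (auto simp: eventually_at_bot_linorder)
  show ?thesis
  proof (rule zero_density_from_blocks[where b = b])
  show "{n. t (n+1) > 0 \<and> t (n+1) - s n \<ge> \<delta> * (t (n+1) - t n)} \<subseteq> {b..}"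
  proof
    fix n assume "n \<in> {n. t (n+1) > 0 \<and> t (n+1) - s n \<ge> \<delta> * (t (n+1) - t n)}"
    then have "\<not> n + 1 \<le> b" using b by force
    then show "n \<in> {b..}" by simp
  qed
  qed (use sparse_in_blocks[OF delta] in blast)
qed

end

lemma real_cauchy_zero:
  fixes t \<mu> :: "int \<Rightarrow> real" and A B :: "complex \<Rightarrow> complex" and x :: real
  assumes t_mono: "strict_mono t" and mu_nonneg: "\<And>k. \<mu> k \<ge> 0" and mu_sum: "\<mu> summable_on UNIV"
    and A_zeros: "{z. A z = 0} = range (\<lambda>n. complex_of_real (t n))"
    and B_def: "\<And>z. A z \<noteq> 0 \<Longrightarrow>
                B z / A z = (\<Sum>\<^sub>\<infinity>n. complex_of_real (\<mu> n) / (z - complex_of_real (t n)))"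
    and x: "t n < x" "x < t (n+1)" and zero: "B (complex_of_real x) = 0"
  shows "(\<Sum>\<^sub>\<infinity>k. \<mu> k / (x - t k)) = 0"
proof -
  have A_nonzero: "A (complex_of_real x) \<noteq> 0"
  proof
    assume "A (complex_of_real x) = 0"
    then have "complex_of_real x \<in> range (\<lambda>n. complex_of_real (t n))" using A_zeros by blast
    then obtain k where "x = t k" by auto
    moreover have "t k \<le> t n \<or> t (n+1) \<le> t k"
      using t_mono by (cases "k \<le> n") (auto simp: strict_mono_less_eq)
    ultimately show False using x by auto
  qed
  then have "(\<Sum>\<^sub>\<infinity>k. complex_of_real (\<mu> k / (x - t k))) = 0"
    using B_def[OF A_nonzero] zero by simp
  moreover have "(\<lambda>k. \<mu> k / (x - t k)) summable_on UNIV"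
    by (rule gap_sum_summable[OF t_mono mu_nonneg mu_sum x])
  then have "(\<Sum>\<^sub>\<infinity>k. complex_of_real (\<mu> k / (x - t k))) = complex_of_real (\<Sum>\<^sub>\<infinity>k. \<mu> k / (x - t k))"
    by (rule infsumI[OF has_sum_of_real[OF has_sum_infsum]])
  ultimately show ?thesis by simp
qed

context interlaced_zeros
begin

(* Reflecting the configuration through the origin,  t' n = - t (-n), \<mu>' n = \<mu> (-n),
   turns the gap n into the gap -n-1 and its zero into s' (-n-1) = - s n. *)
lemma reflect:
  "interlaced_zeros (\<lambda>n. - t (- n)) (\<lambda>n. \<mu> (- n)) (\<lambda>n. - s (- n - 1))"
proof
  show "strict_mono (\<lambda>n. - t (- n))"
    by (rule strict_monoI) (simp add: t_less)
  have "filterlim (\<lambda>n. t (- n)) at_bot (at_top :: int filter)"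
    using t_bot unfolding filterlim_def at_top_mirror filtermap_filtermap by simp
  then show "filterlim (\<lambda>n. - t (- n)) at_top at_top" by (simp add: filterlim_uminus_at_bot)
  have "filterlim (\<lambda>n. t (- n)) at_top (at_bot :: int filter)"
    using t_top unfolding filterlim_def at_bot_mirror filtermap_filtermap by simp
  then show "filterlim (\<lambda>n. - t (- n)) at_bot at_bot" by (simp add: filterlim_uminus_at_top)
  show "\<mu> (- n) > 0" for n using mu_pos by simp
  have inj: "inj (uminus :: int \<Rightarrow> int)" by (simp add: inj_def)
  have surj: "range (uminus :: int \<Rightarrow> int) = UNIV" by (metis surj_def add.inverse_inverse)
  show "(\<lambda>n. \<mu> (- n)) summable_on UNIV"
    using summable_on_reindex[OF inj, of \<mu>] mu_summable unfolding surj by (simp add: comp_def)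
  show "- t (- n) < - s (- n - 1) \<and> - s (- n - 1) < - t (- (n + 1))" for n
  proof -
    have e: "- (n + 1) = - n - 1" "- n - 1 + 1 = - n" by simp_all
    show ?thesis using s_gap[of "- n - 1"] unfolding e by linarith
  qed
  show "(\<Sum>\<^sub>\<infinity>k. \<mu> (- k) / (- s (- n - 1) - - t (- k))) = 0" for n
  proof -
    define g where "g j = \<mu> j / (s (- n - 1) - t j)" for j
    have "(\<lambda>k. \<mu> (- k) / (- s (- n - 1) - - t (- k))) = (\<lambda>k. - (g \<circ> uminus) k)"
      unfolding g_def comp_def by (simp add: divide_minus_right[symmetric])
    then have "(\<Sum>\<^sub>\<infinity>k. \<mu> (- k) / (- s (- n - 1) - - t (- k))) = - infsum (g \<circ> uminus) UNIV"
      by (simp add: infsum_uminus comp_def)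
    also have "infsum (g \<circ> uminus) UNIV = infsum g UNIV"
      using infsum_reindex[OF inj, of g] surj by simp
    finally show ?thesis using s_zero[of "- n - 1"] unfolding g_def by simp
  qed
qed

lemma regular_right_reflect:
  assumes C_pos: "C > 0" and a_ge: "a \<ge> 2" and rho_gt: "\<rho> > 1"
    and comparable_left: "\<And>n k. 2*n \<le> k \<Longrightarrow> k \<le> n \<Longrightarrow>
        t (k+1) - t k \<le> C * (t (n+1) - t n) \<and> t (n+1) - t n \<le> C * (t (k+1) - t k)"
    and growth_left: "\<And>n. n < 0 \<Longrightarrow> \<rho> * \<bar>t n\<bar> \<le> \<bar>t (int a * n)\<bar>"
  shows "regular_right (\<lambda>n. - t (- n)) (\<lambda>n. \<mu> (- n)) (\<lambda>n. - s (- n - 1)) a \<rho> C"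
proof (rule regular_right.intro[OF reflect], unfold_locales)
  fix n k :: int assume nk: "0 \<le> n" "n \<le> k" "k \<le> 2*n"
  have e: "-k-1+1 = -k" "-n-1+1 = -n" "-(k+1) = -k-1" "-(n+1) = -n-1" by simp_all
  have swap: "- x - - y = y - x" for x y :: real by simp
  have "t (-k) - t (-k-1) \<le> C * (t (-n) - t (-n-1)) \<and> t (-n) - t (-n-1) \<le> C * (t (-k) - t (-k-1))"
    using comparable_left[of "-n-1" "-k-1"] nk unfolding e(1,2) by auto
  then show "- t (- (k+1)) - - t (- k) \<le> C * (- t (- (n+1)) - - t (- n)) \<and>
        - t (- (n+1)) - - t (- n) \<le> C * (- t (- (k+1)) - - t (- k))"
    unfolding e(3,4) swap .
next
  fix n :: int assume "n > 0"
  then show "\<rho> * \<bar>- t (- n)\<bar> \<le> \<bar>- t (- (int a * n))\<bar>" using growth_left[of "- n"] by simp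
qed (use C_pos a_ge rho_gt in auto)

(* Left half of the theorem, obtained from the right half of the reflected configuration:
   the bad indices n with t n < 0 are mapped by n \<mapsto> -n-1 into its bad set. *)
theorem zero_density_left:
  assumes delta: "\<delta> > 0"
    and reflected: "regular_right (\<lambda>n. - t (- n)) (\<lambda>n. \<mu> (- n)) (\<lambda>n. - s (- n - 1)) a \<rho> C"
  shows "zero_density {n. t n < 0 \<and> s n - t n \<ge> \<delta> * (t (n+1) - t n)}"
proof (rule zero_density_subset)
  let ?bad' = "{m. - t (- (m+1)) > 0 \<and> - t (- (m+1)) - - s (- m - 1) \<ge> \<delta> * (- t (- (m+1)) - - t (- m))}"
  show "zero_density ((\<lambda>m. - m - 1) ` ?bad')"
    by (rule zero_density_reflect[OF regular_right.zero_density_right[OF reflected delta]])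
  show "{n. t n < 0 \<and> s n - t n \<ge> \<delta> * (t (n+1) - t n)} \<subseteq> (\<lambda>m. - m - 1) ` ?bad'"
  proof
    fix n assume "n \<in> {n. t n < 0 \<and> s n - t n \<ge> \<delta> * (t (n+1) - t n)}"
    then have "- n - 1 \<in> ?bad'" by (simp add: algebra_simps)
    then show "n \<in> (\<lambda>m. - m - 1) ` ?bad'" by (rule rev_image_eqI) simp
  qed
qed

end

(* The entire functions A and B enter only through real_cauchy_zero: the zeros s n make
   the real Cauchy sums vanish. *)
theorem corollary5p4:
  fixes t :: "int \<Rightarrow> real" and \<mu> :: "int \<Rightarrow> real" and s :: "int \<Rightarrow> real"
    and A B :: "complex \<Rightarrow> complex" and a :: nat and \<rho> :: real
  assumes t_mono: "strict_mono t"
    and t_top: "filterlim t at_top at_top"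
    and t_bot: "filterlim t at_bot at_bot"
    and mu_pos: "\<And>n. \<mu> n > 0"
    and mu_sum: "\<mu> summable_on UNIV"
    and A_entire: "A holomorphic_on UNIV"
    and A_real: "\<And>x::real. A (complex_of_real x) \<in> \<real>"
    and A_zeros: "{z. A z = 0} = range (\<lambda>n. complex_of_real (t n))"
    and A_simple: "\<And>n. deriv A (complex_of_real (t n)) \<noteq> 0"
    and B_entire: "B holomorphic_on UNIV"
    and B_def: "\<And>z. A z \<noteq> 0 \<Longrightarrow>
                B z / A z = (\<Sum>\<^sub>\<infinity>n. complex_of_real (\<mu> n) / (z - complex_of_real (t n)))"
    and s_int: "\<And>n. t n < s n \<and> s n < t (n + 1)"
    and s_zero: "\<And>n. B (complex_of_real (s n)) = 0"
    and comparable: "\<exists>C>0. \<forall>n k. (n \<le> k \<and> k \<le> 2 * n) \<or> (2 * n \<le> k \<and> k \<le> n) \<longrightarrow>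
                 (t (k + 1) - t k) \<le> C * (t (n + 1) - t n) \<and>
                 (t (n + 1) - t n) \<le> C * (t (k + 1) - t k)"
    and a_ge: "a \<ge> 2" and rho_gt: "\<rho> > 1"
    and growth: "\<And>n. n \<noteq> 0 \<Longrightarrow> \<bar>t (int a * n)\<bar> \<ge> \<rho> * \<bar>t n\<bar>"
  shows "\<forall>\<delta>>0. zero_density {n. t n > 0 \<and> t (n + 1) - s n \<ge> \<delta> * (t (n + 1) - t n)} \<and>
               zero_density {n. t n < 0 \<and> s n - t n \<ge> \<delta> * (t (n + 1) - t n)}"
proof (intro allI impI)
  fix \<delta> :: real assume delta: "\<delta> > 0"
  obtain C where C_pos: "C > 0" and comparable: "\<And>n k. (n \<le> k \<and> k \<le> 2 * n) \<or> (2 * n \<le> k \<and> k \<le> n) \<Longrightarrow>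
      t (k + 1) - t k \<le> C * (t (n + 1) - t n) \<and> t (n + 1) - t n \<le> C * (t (k + 1) - t k)"
    using comparable by blast
  have mu_nonneg: "\<And>k. \<mu> k \<ge> 0" using mu_pos less_imp_le by blast
  interpret interlaced_zeros t \<mu> s
  proof
    show "(\<Sum>\<^sub>\<infinity>k. \<mu> k / (s n - t k)) = 0" for n
      using real_cauchy_zero[OF t_mono mu_nonneg mu_sum A_zeros B_def] s_int s_zero by blast
  qed (use t_mono t_top t_bot mu_pos mu_sum s_int in auto)
  interpret right: regular_right t \<mu> s a \<rho> C
    by unfold_locales (use C_pos comparable a_ge rho_gt growth in auto)
  have left: "regular_right (\<lambda>n. - t (- n)) (\<lambda>n. \<mu> (- n)) (\<lambda>n. - s (- n - 1)) a \<rho> C"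
    by (rule regular_right_reflect) (use C_pos comparable a_ge rho_gt growth in auto)
  have "{n. t n > 0 \<and> t (n + 1) - s n \<ge> \<delta> * (t (n + 1) - t n)}
      \<subseteq> {n. t (n + 1) > 0 \<and> t (n + 1) - s n \<ge> \<delta> * (t (n + 1) - t n)}"
    using s_int by (force intro: less_trans)
  then show "zero_density {n. t n > 0 \<and> t (n + 1) - s n \<ge> \<delta> * (t (n + 1) - t n)} \<and>
      zero_density {n. t n < 0 \<and> s n - t n \<ge> \<delta> * (t (n + 1) - t n)}"
    using zero_density_subset right.zero_density_right[OF delta] zero_density_left[OF delta left] by blast
qed

end
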